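(* Let $\mathcal{H}=(\mathcal{V},\mathcal{E})$ be a $3$-uniform Berge-$K_4$-saturated hypergraph and let $u,v\in\mathcal{V}$ be distinct. If $\mathcal{T}$ can be added on $(u,v)$, then for every positive integer $k$, $k$ copies of $\mathcal{T}$ can be added on $(u,v)$ simultaneously; that is, the hypergraph obtained from $\mathcal{H}$ by adding $2k$ new vertices $a_1^i,a_2^i$ ($1\le i\le k$) and the $2k$ hyperedges $a_1^ia_2^iu,\ a_1^ia_2^iv$ ($1\le i\le k$) is Berge-$K_4$-saturated. Moreover, it is impossible to add two copies of $\mathcal{T}$ simultaneously on two distinct pairs of vertices of $\mathcal{V}$: if $(u,v)\neq(u',v')$ are distinct pairs of vertices of $\mathcal V$, the hypergraph obtained from $\mathcal{H}$ by adding new vertices $a_1,a_2,a_3,a_4$ and hyperedges $a_1a_2u,a_1a_2v,a_3a_4u',a_3a_4v'$ is not Berge-$K_4$-saturated.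
   Context: A $3$-graph has all hyperedges of size $3$. A $3$-graph contains a Berge-$K_4$ if there are $4$ distinct vertices and $6$ distinct hyperedges, one containing each of the $6$ pairs of these vertices. A $3$-graph $\mathcal{H}$ is Berge-$K_4$-saturated if it contains no Berge-$K_4$, but for every $3$-set $e$ of vertices with $e\notin E(\mathcal{H})$, $\mathcal{H}+e$ contains a Berge-$K_4$. $\mathcal{T}$ denotes the hypergraph on $\{a_1,a_2,x_1,x_2\}$ with hyperedges $a_1a_2x_1,a_1a_2x_2$. We say $\mathcal{T}$ can be added on $(u,v)$ if the hypergraph obtained from $\mathcal{H}$ by adding two new vertices $a_1,a_2$ and the hyperedges $a_1a_2u,a_1a_2v$ (i.e. identifying $x_1,x_2$ with $u,v$) is Berge-$K_4$-saturated. *)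

theory Defs
  imports Main
begin

definition three_graph :: "'a set \<Rightarrow> 'a set set \<Rightarrow> bool" where
  "three_graph V E \<longleftrightarrow> (\<forall>e\<in>E. e \<subseteq> V \<and> card e = 3)"

text \<open>Berge-K4: 4 distinct vertices and 6 distinct hyperedges, one containing each of
  the 6 pairs, i.e. an injective choice of a containing hyperedge for each pair.\<close>
definition has_berge_K4 :: "'a set set \<Rightarrow> bool" where
  "has_berge_K4 E \<longleftrightarrow> (\<exists>Q f. card Q = 4 \<and>
      inj_on f {p. p \<subseteq> Q \<and> card p = 2} \<and>
      (\<forall>p. p \<subseteq> Q \<and> card p = 2 \<longrightarrow> f p \<in> E \<and> p \<subseteq> f p))"

definition berge_K4_saturated :: "'a set \<Rightarrow> 'a set set \<Rightarrow> bool" where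
  "berge_K4_saturated V E \<longleftrightarrow> three_graph V E \<and> \<not> has_berge_K4 E \<and>
     (\<forall>e. e \<subseteq> V \<and> card e = 3 \<and> e \<notin> E \<longrightarrow> has_berge_K4 (insert e E))"

definition addT_V :: "'a set \<Rightarrow> nat \<Rightarrow> ('a + nat \<times> nat) set" where
  "addT_V V k = Inl ` V \<union> {Inr (i, j) | i j. i < k \<and> j < 2}"

definition addT_E :: "'a set set \<Rightarrow> nat \<Rightarrow> 'a \<Rightarrow> 'a \<Rightarrow> ('a + nat \<times> nat) set set" where
  "addT_E E k u v = (image Inl) ` E \<union>
     {{Inr (i, 0), Inr (i, 1), Inl w} | i w. i < k \<and> (w = u \<or> w = v)}"

definition addT2_V :: "'a set \<Rightarrow> ('a + nat \<times> nat) set" where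
  "addT2_V V = Inl ` V \<union> {Inr (i, j) | i j. i < 2 \<and> j < 2}"

definition addT2_E :: "'a set set \<Rightarrow> 'a \<Rightarrow> 'a \<Rightarrow> 'a \<Rightarrow> 'a \<Rightarrow> ('a + nat \<times> nat) set set" where
  "addT2_E E u v u' v' = (image Inl) ` E \<union>
     {{Inr (0, 0), Inr (0, 1), Inl u}, {Inr (0, 0), Inr (0, 1), Inl v},
      {Inr (1, 0), Inr (1, 1), Inl u'}, {Inr (1, 0), Inr (1, 1), Inl v'}}"

end

theory Submission
  imports Defs "HOL-Combinatorics.Transposition"
begin

text \<open>A Berge-K4 uses a vertex only if it lies in at least three hyperedges, and two of its
  vertices only if together they lie in at least five. The new vertices a1, a2 of a copy of T
  lie in just two hyperedges, so adding copies of T creates no Berge-K4; and once a hyperedge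
  through them is added, a Berge-K4 either avoids both or contains the three other vertices of
  their hyperedges.

  Saturation of the k-fold extension: a missing hyperedge inside V is handled by the saturation
  of H; one meeting a single copy by the saturation of H + T, after renaming that copy to the
  first one; one meeting two copies i, j closes the Berge-K4 on u, v, a^i, a^j, whose sixth
  hyperedge is a hyperedge of H through u and v. Such a hyperedge exists: adding a1 a2 w with
  w \<noteq> u, v to H + T creates a Berge-K4, which then contains u and v, and the hyperedge it
  uses for the pair uv comes from H.

  Two copies on different pairs: adding a1 a2 a3 creates no Berge-K4. Either a1, a2 are unused;
  then so is a3, since the remaining hyperedges through a3 contain a4, which lies in only two
  hyperedges, and the Berge-K4 would live in H. Or u, v, a3 are used, and the hyperedges chosen
  for a3 u and a3 v force {u, v} = {u', v'}.\<close>

lemma card_two_le: "card {x, y} \<le> 2"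
  using card_length[of "[x, y]"] by simp

lemma card_three_le: "card {x, y, z} \<le> 3"
  using card_length[of "[x, y, z]"] by simp

definition berge_K4_core :: "'a set set \<Rightarrow> 'a set \<Rightarrow> ('a set \<Rightarrow> 'a set) \<Rightarrow> bool" where
  "berge_K4_core F Q f \<longleftrightarrow> card Q = 4 \<and> inj_on f {p. p \<subseteq> Q \<and> card p = 2} \<and>
     (\<forall>p. p \<subseteq> Q \<and> card p = 2 \<longrightarrow> f p \<in> F \<and> p \<subseteq> f p)"

lemma has_berge_K4_iff_core: "has_berge_K4 F \<longleftrightarrow> (\<exists>Q f. berge_K4_core F Q f)"
  by (simp add: has_berge_K4_def berge_K4_core_def)

lemma berge_K4_core_finite: "berge_K4_core F Q f \<Longrightarrow> finite Q"
  unfolding berge_K4_core_def by (metis card.infinite zero_neq_numeral)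

lemma berge_K4_core_pair:
  assumes "berge_K4_core F Q f" "x \<in> Q" "y \<in> Q" "x \<noteq> y"
  shows "f {x, y} \<in> F" "x \<in> f {x, y}" "y \<in> f {x, y}"
proof -
  have "{x, y} \<subseteq> Q" "card {x, y} = 2" using assms(2-4) by auto
  then show "f {x, y} \<in> F" "x \<in> f {x, y}" "y \<in> f {x, y}"
    using assms(1) unfolding berge_K4_core_def by blast+
qed

lemma berge_K4_core_subset_Union:
  assumes "berge_K4_core F Q f" shows "Q \<subseteq> \<Union>F"
proof
  fix q assume q: "q \<in> Q"
  have "card (Q - {q}) = 3"
    using assms q berge_K4_core_finite[OF assms] by (simp add: berge_K4_core_def)
  then have "Q - {q} \<noteq> {}" by force
  then obtain x where "x \<in> Q" "x \<noteq> q" by blast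
  then show "q \<in> \<Union>F" using berge_K4_core_pair[OF assms q] by blast
qed

lemma card_doubleton_subsets:
  assumes "card Q = 4" shows "card {p. p \<subseteq> Q \<and> card p = 2} = 6"
proof -
  have "finite Q" using assms by (metis card.infinite zero_neq_numeral)
  then have "card {p. p \<subseteq> Q \<and> card p = 2} = 4 choose 2" using n_subsets assms by metis
  also have "\<dots> = 6" by (simp add: numeral_eq_Suc)
  finally show ?thesis .
qed

lemma berge_K4_core_card_edges:
  assumes "berge_K4_core F Q f" "finite F" shows "6 \<le> card F"
proof -
  let ?P = "{p. p \<subseteq> Q \<and> card p = 2}"
  have "card ?P = 6" using assms(1) card_doubleton_subsets unfolding berge_K4_core_def by blast
  moreover have "inj_on f ?P" "f ` ?P \<subseteq> F" using assms(1) unfolding berge_K4_core_def by auto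
  ultimately show ?thesis using card_mono[OF assms(2), of "f ` ?P"] by (simp add: card_image)
qed

lemma berge_K4_core_edges_at:
  assumes K: "berge_K4_core F Q f" and q: "q \<in> Q"
  defines "S \<equiv> (\<lambda>x. f {q, x}) ` (Q - {q})"
  shows "card S = 3" "S \<subseteq> {g \<in> F. q \<in> g}"
proof -
  let ?P = "(\<lambda>x. {q, x}) ` (Q - {q})"
  have "inj_on (\<lambda>x. {q, x}) (Q - {q})" by (auto simp: inj_on_def doubleton_eq_iff)
  moreover have "card (Q - {q}) = 3"
    using K q berge_K4_core_finite[OF K] by (simp add: berge_K4_core_def)
  ultimately have "card ?P = 3" by (simp add: card_image)
  moreover have "?P \<subseteq> {p. p \<subseteq> Q \<and> card p = 2}" using q by auto
  then have "inj_on f ?P" using K unfolding berge_K4_core_def by (meson inj_on_subset)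
  moreover have "S = f ` ?P" unfolding S_def by (simp add: image_image)
  ultimately show "card S = 3" by (simp add: card_image)
  show "S \<subseteq> {g \<in> F. q \<in> g}" unfolding S_def using berge_K4_core_pair[OF K q] by auto
qed

lemma berge_K4_core_degree:
  assumes "berge_K4_core F Q f" "q \<in> Q" "{g \<in> F. q \<in> g} \<subseteq> G" "finite G"
  shows "3 \<le> card G"
proof -
  have "(\<lambda>x. f {q, x}) ` (Q - {q}) \<subseteq> G" using berge_K4_core_edges_at(2)[OF assms(1,2)] assms(3) by blast
  from card_mono[OF assms(4) this] show ?thesis unfolding berge_K4_core_edges_at(1)[OF assms(1,2)] .
qed

lemma berge_K4_core_degree_two:
  assumes "berge_K4_core F Q f" "{g \<in> F. q \<in> g} \<subseteq> {g1, g2}"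
  shows "q \<notin> Q"
proof
  assume "q \<in> Q"
  then have "3 \<le> card {g1, g2}" using berge_K4_core_degree[OF assms(1) _ assms(2)] by blast
  then show False using card_two_le[of g1 g2] by linarith
qed

lemma berge_K4_core_low_degree:
  assumes K: "berge_K4_core F Q f" and q: "q \<in> Q" and G: "{g \<in> F. q \<in> g} \<subseteq> G" "finite G" "card G \<le> 3"
    and g: "g \<in> G"
  shows "\<exists>x \<in> Q. x \<noteq> q \<and> x \<in> g"
proof -
  let ?S = "(\<lambda>x. f {q, x}) ` (Q - {q})"
  have sub: "?S \<subseteq> G" using berge_K4_core_edges_at(2)[OF K q] G(1) by blast
  then have "card ?S \<le> card G" by (rule card_mono[OF G(2)])
  then have "card ?S = card G" using berge_K4_core_edges_at(1)[OF K q] G(3) by linarith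
  then have "?S = G" using card_subset_eq[OF G(2) sub] by blast
  then obtain x where "x \<in> Q - {q}" "g = f {q, x}" using g by blast
  then show ?thesis using berge_K4_core_pair[OF K q] by auto
qed

lemma berge_K4_core_two_vertices_degree:
  assumes K: "berge_K4_core F Q f" and q: "q1 \<in> Q" "q2 \<in> Q" "q1 \<noteq> q2"
    and G: "{g \<in> F. q1 \<in> g \<or> q2 \<in> g} \<subseteq> G" "finite G"
  shows "5 \<le> card G"
proof -
  let ?P = "{p. p \<subseteq> Q \<and> card p = 2}"
  define r where "r = Q - {q1, q2}"
  have finQ: "finite Q" using berge_K4_core_finite[OF K] .
  have P: "card ?P = 6" using K card_doubleton_subsets unfolding berge_K4_core_def by blast
  have r: "r \<in> ?P"
    using K q finQ unfolding r_def berge_K4_core_def by (auto simp: card_Diff_subset)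
  have "card (?P - {r}) = 5" using P r card_ge_0_finite[of ?P] by (simp add: card_Diff_singleton)
  moreover have "inj_on f (?P - {r})" using K unfolding berge_K4_core_def by (meson Diff_subset inj_on_subset)
  ultimately have image: "card (f ` (?P - {r})) = 5" by (simp add: card_image)
  have "f ` (?P - {r}) \<subseteq> G"
  proof
    fix g assume "g \<in> f ` (?P - {r})"
    then obtain p where p: "p \<in> ?P" "p \<noteq> r" "g = f p" by auto
    have "q1 \<in> p \<or> q2 \<in> p"
    proof (rule ccontr)
      assume "\<not> (q1 \<in> p \<or> q2 \<in> p)"
      then have "p \<subseteq> r" using p(1) unfolding r_def by auto
      moreover have "finite r" "card p = card r" using finQ p(1) r unfolding r_def by auto
      ultimately show False using card_subset_eq p(2) by blast
    qed
    then show "g \<in> G" using K p G(1) unfolding berge_K4_core_def by blast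
  qed
  from card_mono[OF G(2) this] show ?thesis unfolding image .
qed

lemma berge_K4_core_one_twin:
  assumes K: "berge_K4_core F Q f" and "a \<in> Q" "b \<notin> Q"
    and G: "{g \<in> F. a \<in> g} \<subseteq> {{a, b, x}, {a, b, y}, {a, b, z}}"
  shows "x \<in> Q" "y \<in> Q" "z \<in> Q"
proof -
  note low = berge_K4_core_low_degree[OF K \<open>a \<in> Q\<close> G _ card_three_le]
  have "t \<in> Q" if t: "{a, b, t} \<in> {{a, b, x}, {a, b, y}, {a, b, z}}" for t
  proof -
    obtain w where "w \<in> Q" "w \<noteq> a" "w \<in> {a, b, t}" using low[OF _ t] by auto
    then show "t \<in> Q" using \<open>b \<notin> Q\<close> by auto
  qed
  then show "x \<in> Q" "y \<in> Q" "z \<in> Q" by simp_all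
qed

text \<open>This is the situation of the two new vertices of a copy of T after one hyperedge
  through them has been added.\<close>
lemma berge_K4_core_twins:
  assumes K: "berge_K4_core F Q f" and ab: "a \<noteq> b"
    and G: "{g \<in> F. a \<in> g \<or> b \<in> g} \<subseteq> {{a, b, x}, {a, b, y}, {a, b, z}}"
  shows "(a \<notin> Q \<and> b \<notin> Q) \<or> (x \<in> Q \<and> y \<in> Q \<and> z \<in> Q)"
proof -
  let ?G = "{{a, b, x}, {a, b, y}, {a, b, z}}"
  have "\<not> (a \<in> Q \<and> b \<in> Q)"
  proof
    assume "a \<in> Q \<and> b \<in> Q"
    moreover have "finite ?G" by simp
    ultimately have "5 \<le> card ?G" using berge_K4_core_two_vertices_degree[OF K _ _ ab G] by blast
    moreover have "card ?G \<le> 3" by (rule card_three_le)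
    ultimately show False by linarith
  qed
  moreover have "{g \<in> F. a \<in> g} \<subseteq> ?G" using G by blast
  moreover have "{g \<in> F. b \<in> g} \<subseteq> {{b, a, x}, {b, a, y}, {b, a, z}}"
    using G by (simp only: insert_commute[of a b]) blast
  ultimately show ?thesis using berge_K4_core_one_twin[OF K] by blast
qed

lemma has_berge_K4_image:
  assumes h: "inj h" and FG: "\<And>g. g \<in> F \<Longrightarrow> h ` g \<in> G" and "has_berge_K4 F"
  shows "has_berge_K4 G"
proof -
  obtain Q f where K: "berge_K4_core F Q f" using assms(3) has_berge_K4_iff_core by blast
  define f' where "f' p = h ` f (h -` p)" for p
  have card_h: "card (h ` A) = card A" for A by (rule card_image[OF inj_on_subset[OF h subset_UNIV]])
  have pre: "h -` p \<in> {p. p \<subseteq> Q \<and> card p = 2}" "h ` (h -` p) = p"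
    if "p \<in> {p. p \<subseteq> h ` Q \<and> card p = 2}" for p
  proof -
    show hp: "h ` (h -` p) = p" using that by auto
    have "card (h -` p) = 2" using that card_h[of "h -` p"] unfolding hp by simp
    moreover have "h -` p \<subseteq> Q" using that inj_image_mem_iff[OF h] by blast
    ultimately show "h -` p \<in> {p. p \<subseteq> Q \<and> card p = 2}" by simp
  qed
  have "card (h ` Q) = 4" using K card_h unfolding berge_K4_core_def by simp
  moreover have "inj_on f' {p. p \<subseteq> h ` Q \<and> card p = 2}"
  proof (rule inj_onI)
    fix p1 p2
    assume p: "p1 \<in> {p. p \<subseteq> h ` Q \<and> card p = 2}" "p2 \<in> {p. p \<subseteq> h ` Q \<and> card p = 2}"
      and "f' p1 = f' p2"
    then have "f (h -` p1) = f (h -` p2)" using h unfolding f'_def by (simp add: inj_image_eq_iff)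
    moreover have "inj_on f {p. p \<subseteq> Q \<and> card p = 2}" using K unfolding berge_K4_core_def by blast
    ultimately have "h -` p1 = h -` p2" using pre(1)[OF p(1)] pre(1)[OF p(2)] by (simp add: inj_on_eq_iff)
    then show "p1 = p2" using pre(2)[OF p(1)] pre(2)[OF p(2)] by simp
  qed
  moreover have "f' p \<in> G \<and> p \<subseteq> f' p" if "p \<subseteq> h ` Q" "card p = 2" for p
  proof -
    have "f (h -` p) \<in> F" "h -` p \<subseteq> f (h -` p)"
      using K pre(1)[of p] that unfolding berge_K4_core_def by auto
    moreover have "h ` (h -` p) = p" using pre(2) that by simp
    ultimately show ?thesis using FG unfolding f'_def by (metis image_mono)
  qed
  ultimately have "berge_K4_core G (h ` Q) f'" unfolding berge_K4_core_def by blast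
  then show ?thesis using has_berge_K4_iff_core by blast
qed

lemma has_berge_K4_preimage:
  assumes h: "inj h" and K: "berge_K4_core F Q f" and Q: "Q \<subseteq> range h"
    and F: "\<And>g x y. g \<in> F \<Longrightarrow> x \<noteq> y \<Longrightarrow> h x \<in> g \<Longrightarrow> h y \<in> g \<Longrightarrow> g \<in> (`) h ` E"
  shows "has_berge_K4 E"
proof -
  define f' where "f' p = h -` f (h ` p)" for p
  have card_h: "card (h ` A) = card A" for A by (rule card_image[OF inj_on_subset[OF h subset_UNIV]])
  have pair: "h ` p \<in> {p. p \<subseteq> Q \<and> card p = 2}" if "p \<in> {p. p \<subseteq> h -` Q \<and> card p = 2}" for p
    using that card_h by auto
  have edge: "f (h ` p) = h ` f' p" "f' p \<in> E" "p \<subseteq> f' p"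
    if p: "p \<in> {p. p \<subseteq> h -` Q \<and> card p = 2}" for p
  proof -
    have fp: "f (h ` p) \<in> F" "h ` p \<subseteq> f (h ` p)"
      using K pair[OF p] unfolding berge_K4_core_def by auto
    obtain x y where "p = {x, y}" "x \<noteq> y" using p by (auto simp: card_2_iff)
    then have "f (h ` p) \<in> (`) h ` E" using F[OF fp(1)] fp(2) by simp
    then obtain e where e: "e \<in> E" "f (h ` p) = h ` e" by blast
    then have "f' p = e" unfolding f'_def using h by (simp add: inj_vimage_image_eq)
    then show "f (h ` p) = h ` f' p" "f' p \<in> E" "p \<subseteq> f' p"
      using e fp(2) h by (auto simp: inj_image_subset_iff)
  qed
  have "card (h -` Q) = 4"
    using K card_h[of "h -` Q"] Q unfolding berge_K4_core_def by (simp add: image_vimage_eq inf_absorb1)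
  moreover have "inj_on f' {p. p \<subseteq> h -` Q \<and> card p = 2}"
  proof (rule inj_onI)
    fix p1 p2
    assume p: "p1 \<in> {p. p \<subseteq> h -` Q \<and> card p = 2}" "p2 \<in> {p. p \<subseteq> h -` Q \<and> card p = 2}"
      and "f' p1 = f' p2"
    then have "f (h ` p1) = f (h ` p2)" using edge(1) by simp
    moreover have "inj_on f {p. p \<subseteq> Q \<and> card p = 2}" using K unfolding berge_K4_core_def by blast
    ultimately have "h ` p1 = h ` p2" using pair[OF p(1)] pair[OF p(2)] by (simp add: inj_on_eq_iff)
    then show "p1 = p2" using h by (simp add: inj_image_eq_iff)
  qed
  ultimately have "berge_K4_core E (h -` Q) f'" using edge(2,3) unfolding berge_K4_core_def by blast
  then show ?thesis using has_berge_K4_iff_core by blast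
qed

lemma doubleton_in_K4_pairs:
  assumes "x \<in> {a, b, c, d}" "y \<in> {a, b, c, d}" "x \<noteq> y"
  shows "{x, y} \<in> {{a, b}, {a, c}, {a, d}, {b, c}, {b, d}, {c, d}}"
  using assms by (elim insertE emptyE; simp add: insert_commute)

lemma has_berge_K4_intro:
  assumes "distinct [a, b, c, d]" "distinct [e1, e2, e3, e4, e5, e6]"
    "e1 \<in> F" "e2 \<in> F" "e3 \<in> F" "e4 \<in> F" "e5 \<in> F" "e6 \<in> F"
    "{a, b} \<subseteq> e1" "{a, c} \<subseteq> e2" "{a, d} \<subseteq> e3" "{b, c} \<subseteq> e4" "{b, d} \<subseteq> e5" "{c, d} \<subseteq> e6"
  shows "has_berge_K4 F"
proof -
  define f where "f p = (if a \<in> p \<and> b \<in> p then e1 else if a \<in> p \<and> c \<in> p then e2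
     else if a \<in> p \<and> d \<in> p then e3 else if b \<in> p \<and> c \<in> p then e4
     else if b \<in> p \<and> d \<in> p then e5 else e6)" for p
  define S where "S = {{a, b}, {a, c}, {a, d}, {b, c}, {b, d}, {c, d}}"
  have P: "{p. p \<subseteq> {a, b, c, d} \<and> card p = 2} \<subseteq> S"
  proof
    fix p assume p: "p \<in> {p. p \<subseteq> {a, b, c, d} \<and> card p = 2}"
    then have "card p = 2" by simp
    then obtain x y where xy: "p = {x, y}" "x \<noteq> y" unfolding card_2_iff by blast
    then have "x \<in> {a, b, c, d}" "y \<in> {a, b, c, d}" using p by blast+
    then show "p \<in> S" unfolding S_def xy(1) by (rule doubleton_in_K4_pairs[OF _ _ xy(2)])
  qed
  have f: "f {a, b} = e1" "f {a, c} = e2" "f {a, d} = e3" "f {b, c} = e4" "f {b, d} = e5" "f {c, d} = e6"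
    unfolding f_def using assms(1) by auto
  have fin: "finite S" unfolding S_def by simp
  have "f ` S = set [e1, e2, e3, e4, e5, e6]" unfolding S_def using f by simp
  then have image: "card (f ` S) = 6" using distinct_card[OF assms(2)] by simp
  have "card S \<le> 6"
    unfolding S_def using card_length[of "[{a, b}, {a, c}, {a, d}, {b, c}, {b, d}, {c, d}]"] by simp
  then have "card (f ` S) = card S" using card_image_le[OF fin, of f] image by linarith
  then have "inj_on f S" using eq_card_imp_inj_on[OF fin] by blast
  then have "inj_on f {p. p \<subseteq> {a, b, c, d} \<and> card p = 2}" using P by (rule inj_on_subset)
  moreover have "f p \<in> F \<and> p \<subseteq> f p" if "p \<in> S" for p
    using that assms(3-14) unfolding S_def by (elim insertE emptyE) (simp_all add: f)
  then have "\<forall>p. p \<subseteq> {a, b, c, d} \<and> card p = 2 \<longrightarrow> f p \<in> F \<and> p \<subseteq> f p" using P by blast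
  moreover have "card {a, b, c, d} = 4" using assms(1) by simp
  ultimately have "berge_K4_core F {a, b, c, d} f" unfolding berge_K4_core_def by blast
  then show ?thesis using has_berge_K4_iff_core by blast
qed

lemma has_berge_K4_insert_addT_two_copies:
  fixes E :: "'a set set" and e :: "('a + nat \<times> nat) set"
  assumes g: "g \<in> E" "u \<in> g" "v \<in> g" and uv: "u \<noteq> v"
    and ij: "i < k" "j < k" "i \<noteq> j" and st: "s < 2" "t < 2" and e: "Inr (i, s) \<in> e" "Inr (j, t) \<in> e"
  shows "has_berge_K4 (insert e (addT_E E k u v))"
proof -
  define T :: "nat \<Rightarrow> 'a \<Rightarrow> ('a + nat \<times> nat) set"
    where "T l w = {Inr (l, 0), Inr (l, 1), Inl w}" for l w
  have T: "T l w \<in> insert e (addT_E E k u v)" if "l < k" "w = u \<or> w = v" for l w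
    using that unfolding T_def addT_E_def by blast
  have T_mem: "{Inl w, Inr (l, r)} \<subseteq> T l w" if "r < 2" for l r w
    using that less_2_cases unfolding T_def by auto
  show ?thesis
  proof (rule has_berge_K4_intro[of "Inl u" "Inl v" "Inr (i, s)" "Inr (j, t)"
        "Inl ` g" "T i u" "T j u" "T i v" "T j v" e])
    show "distinct [Inl u, Inl v, Inr (i, s), Inr (j, t)]" using uv ij(3) by simp
    \<comment> \<open>each of the six hyperedges is identified by these five membership tests\<close>
    define \<sigma> where "\<sigma> X = (Inr (i, 0) \<in> X, Inr (j, 0) \<in> X, Inl u \<in> X, Inl v \<in> X,
      Inr (i, s) \<in> X \<and> Inr (j, t) \<in> X)" for X :: "('a + nat \<times> nat) set"
    have "distinct (map \<sigma> [Inl ` g, T i u, T j u, T i v, T j v, e])"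
      using uv ij(3) e unfolding \<sigma>_def T_def by auto
    then show "distinct [Inl ` g, T i u, T j u, T i v, T j v, e]" unfolding distinct_map by blast
    show "Inl ` g \<in> insert e (addT_E E k u v)" using g(1) unfolding addT_E_def by blast
    show "{Inl u, Inl v} \<subseteq> Inl ` g" using g(2,3) by blast
    show "{Inr (i, s), Inr (j, t)} \<subseteq> e" using e by blast
  qed (use T ij T_mem st in simp_all)
qed

lemma addT_E_cases:
  assumes "g \<in> addT_E E k u v"
  obtains (old) g0 where "g0 \<in> E" "g = Inl ` g0"
    | (new) i w where "i < k" "w = u \<or> w = v" "g = {Inr (i, 0), Inr (i, 1), Inl w}"
  using assms unfolding addT_E_def by blast

lemma three_graph_addT:
  assumes "three_graph V E" "u \<in> V" "v \<in> V"
  shows "three_graph (addT_V V k) (addT_E E k u v)"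
  unfolding three_graph_def
proof
  fix g assume "g \<in> addT_E E k u v"
  then show "g \<subseteq> addT_V V k \<and> card g = 3"
  proof (cases rule: addT_E_cases)
    case (old g0)
    then have "g0 \<subseteq> V" "card g0 = 3" using assms(1) unfolding three_graph_def by auto
    then show ?thesis using old(2) unfolding addT_V_def by (auto simp: card_image)
  next
    case (new i w)
    then show ?thesis using assms(2,3) unfolding addT_V_def by auto
  qed
qed

lemma not_has_berge_K4_addT:
  fixes E :: "'a set set"
  assumes "\<not> has_berge_K4 E" shows "\<not> has_berge_K4 (addT_E E k u v)"
proof
  assume "has_berge_K4 (addT_E E k u v)"
  then obtain Q f where K: "berge_K4_core (addT_E E k u v) Q f" using has_berge_K4_iff_core by blast
  have "Q \<subseteq> range Inl"
  proof
    fix q assume "q \<in> Q"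
    show "q \<in> range Inl"
    proof (cases q)
      case (Inr p)
      then obtain i r where "q = Inr (i, r)" by (cases p) auto
      then have "{g \<in> addT_E E k u v. q \<in> g} \<subseteq>
          {{Inr (i, 0), Inr (i, 1), Inl u}, {Inr (i, 0), Inr (i, 1), Inl v}}"
        unfolding addT_E_def by auto
      then have "q \<notin> Q" by (rule berge_K4_core_degree_two[OF K])
      with \<open>q \<in> Q\<close> show ?thesis by contradiction
    qed simp
  qed
  moreover have "g \<in> (`) Inl ` E"
    if "g \<in> addT_E E k u v" "x \<noteq> y" "Inl x \<in> g" "Inl y \<in> g" for g x y
    using that unfolding addT_E_def by auto
  ultimately have "has_berge_K4 E" by (rule has_berge_K4_preimage[OF inj_Inl K])
  with assms show False ..
qed

lemma not_berge_K4_saturated_addT_two_vertices: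
  fixes E :: "'a set set"
  assumes "three_graph V E" "V \<subseteq> {u, v}" "u \<in> V" "v \<in> V" "u \<noteq> v"
  shows "\<not> berge_K4_saturated (addT_V V 1) (addT_E E 1 u v)"
proof
  define A B :: "'a + nat \<times> nat" where "A = Inr (0, 0)" and "B = Inr (0, 1)"
  define e where "e = {Inl u, Inl v, A}"
  assume sat: "berge_K4_saturated (addT_V V 1) (addT_E E 1 u v)"
  have "E = {}"
  proof (rule ccontr)
    assume "E \<noteq> {}"
    then obtain g where "g \<in> E" by blast
    then have "g \<subseteq> {u, v}" "card g = 3" using assms(1,2) unfolding three_graph_def by auto
    then show False using card_mono[of "{u, v}" g] card_two_le[of u v] by simp
  qed
  have "e \<subseteq> addT_V V 1" "card e = 3"
    using assms(3-5) unfolding e_def A_def addT_V_def by auto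
  moreover have "e \<notin> addT_E E 1 u v"
  proof
    have "A \<in> e" "Inl u \<in> e" "Inl v \<in> e" unfolding e_def by auto
    moreover assume "e \<in> addT_E E 1 u v"
    ultimately show False using assms(5) unfolding addT_E_def A_def by auto
  qed
  ultimately have "has_berge_K4 (insert e (addT_E E 1 u v))"
    using sat unfolding berge_K4_saturated_def by blast
  then obtain Q f where K: "berge_K4_core (insert e (addT_E E 1 u v)) Q f"
    unfolding has_berge_K4_iff_core by blast
  have "insert e (addT_E E 1 u v) = {e, {A, B, Inl u}, {A, B, Inl v}}"
    unfolding addT_E_def \<open>E = {}\<close> A_def B_def by auto
  then have "6 \<le> card {e, {A, B, Inl u}, {A, B, Inl v}}"
    using berge_K4_core_card_edges[OF K] by simp
  moreover have "card {e, {A, B, Inl u}, {A, B, Inl v}} \<le> 3" by (rule card_three_le)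
  ultimately show False by linarith
qed

lemma common_edge_if_saturated_addT:
  fixes E :: "'a set set"
  assumes "three_graph V E" "\<not> has_berge_K4 E" "u \<in> V" "v \<in> V" "u \<noteq> v"
    and sat: "berge_K4_saturated (addT_V V 1) (addT_E E 1 u v)"
  shows "\<exists>g \<in> E. u \<in> g \<and> v \<in> g"
proof -
  obtain w where w: "w \<in> V" "w \<noteq> u" "w \<noteq> v"
    using not_berge_K4_saturated_addT_two_vertices[OF assms(1) _ assms(3-5)] sat by blast
  define A B :: "'a + nat \<times> nat" where "A = Inr (0, 0)" and "B = Inr (0, 1)"
  define e where "e = {A, B, Inl w}"
  let ?F = "insert e (addT_E E 1 u v)"
  have "e \<subseteq> addT_V V 1" "card e = 3" "e \<notin> addT_E E 1 u v"
    using w unfolding e_def A_def B_def addT_V_def addT_E_def by auto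
  then have "has_berge_K4 ?F" using sat unfolding berge_K4_saturated_def by blast
  then obtain Q f where K: "berge_K4_core ?F Q f" unfolding has_berge_K4_iff_core by blast
  have old: "g \<in> (`) Inl ` E" if "g \<in> ?F" "x \<noteq> y" "Inl x \<in> g" "Inl y \<in> g" for g x y
    using that unfolding e_def A_def B_def addT_E_def by auto
  have "{g \<in> ?F. A \<in> g \<or> B \<in> g} \<subseteq> {{A, B, Inl u}, {A, B, Inl v}, {A, B, Inl w}}"
    unfolding e_def A_def B_def addT_E_def by auto
  from berge_K4_core_twins[OF K _ this]
  consider "A \<notin> Q" "B \<notin> Q" | "Inl u \<in> Q" "Inl v \<in> Q" unfolding A_def B_def by auto
  then show ?thesis
  proof cases
    case 1
    have "Q \<subseteq> range Inl"
      using berge_K4_core_subset_Union[OF K] 1 unfolding e_def A_def B_def addT_E_def by auto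
    with old have "has_berge_K4 E" using has_berge_K4_preimage[OF inj_Inl K] by blast
    with assms(2) show ?thesis ..
  next
    case 2
    have "Inl u \<noteq> (Inl v :: 'a + nat \<times> nat)" using assms(5) by simp
    note pair = berge_K4_core_pair[OF K 2 this]
    obtain g where g: "g \<in> E" "f {Inl u, Inl v} = Inl ` g"
      using old[OF pair(1) assms(5) pair(2,3)] by blast
    then have "u \<in> g" "v \<in> g" using pair(2,3) by auto
    with g(1) show ?thesis by blast
  qed
qed

lemma has_berge_K4_insert_addT_old:
  assumes sat: "berge_K4_saturated V E"
    and e: "e \<subseteq> addT_V V k" "card e = 3" "e \<notin> addT_E E k u v" "e \<subseteq> range Inl"
  shows "has_berge_K4 (insert e (addT_E E k u v))"
proof -
  define e0 where "e0 = Inl -` e"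
  have e0: "e = Inl ` e0" using e(4) unfolding e0_def by auto
  have "e0 \<subseteq> V" using e(1) unfolding e0 addT_V_def by auto
  moreover have "card e0 = 3" using e(2) unfolding e0 by (simp add: card_image)
  moreover have "e0 \<notin> E" using e(3) unfolding e0 addT_E_def by auto
  ultimately have "has_berge_K4 (insert e0 E)" using sat unfolding berge_K4_saturated_def by blast
  moreover have "Inl ` g \<in> insert e (addT_E E k u v)" if "g \<in> insert e0 E" for g
    using that unfolding e0 addT_E_def by auto
  ultimately show ?thesis using has_berge_K4_image[OF inj_Inl] by blast
qed

definition swap_copy :: "nat \<Rightarrow> 'a + nat \<times> nat \<Rightarrow> 'a + nat \<times> nat" where
  "swap_copy i = map_sum id (apfst (transpose 0 i))"

lemma swap_copy_simps [simp]:
  "swap_copy i (Inl x) = Inl x" "swap_copy i (Inr (j, r)) = Inr (transpose 0 i j, r)"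
  unfolding swap_copy_def by simp_all

lemma swap_copy_swap_copy [simp]: "swap_copy i (swap_copy i z) = z"
  by (cases z) auto

lemma inj_swap_copy: "inj (swap_copy i)"
  by (metis injI swap_copy_swap_copy)

lemma swap_copy_addT_E:
  assumes "i < k" "g \<in> addT_E E 1 u v"
  shows "swap_copy i ` g \<in> addT_E E k u v"
  using assms(2)
proof (cases rule: addT_E_cases)
  case (old g0)
  then show ?thesis unfolding addT_E_def by (auto simp: image_image)
next
  case (new j w)
  then have "swap_copy i ` g = {Inr (i, 0), Inr (i, 1), Inl w}" by simp
  then show ?thesis using new(2) assms(1) unfolding addT_E_def by blast
qed

lemma has_berge_K4_insert_addT_one_copy:
  fixes E :: "'a set set" and e :: "('a + nat \<times> nat) set"
  assumes sat1: "berge_K4_saturated (addT_V V 1) (addT_E E 1 u v)"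
    and e: "e \<subseteq> addT_V V k" "card e = 3" "e \<notin> addT_E E k u v"
    and i: "i < k" and only_i: "\<And>j r. Inr (j, r) \<in> e \<Longrightarrow> j = i"
  shows "has_berge_K4 (insert e (addT_E E k u v))"
proof -
  define e' where "e' = swap_copy i ` e"
  have e'_swap: "swap_copy i ` e' = e" unfolding e'_def image_image by simp
  have "e' \<subseteq> addT_V V 1"
  proof
    fix z assume "z \<in> e'"
    then obtain y where y: "y \<in> e" "z = swap_copy i y" unfolding e'_def by blast
    show "z \<in> addT_V V 1"
    proof (cases y)
      case (Inl x)
      then show ?thesis using y e(1) unfolding addT_V_def by auto
    next
      case (Inr p)
      then obtain j r where "y = Inr (j, r)" by (cases p) auto
      then show ?thesis using only_i y e(1) unfolding addT_V_def by auto
    qed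
  qed
  moreover have "inj_on (swap_copy i) e" using inj_swap_copy by (rule inj_on_subset) simp
  then have "card e' = 3" using e(2) unfolding e'_def by (simp add: card_image)
  moreover have "e' \<notin> addT_E E 1 u v" using swap_copy_addT_E[OF i, of e'] e'_swap e(3) by auto
  ultimately have K4: "has_berge_K4 (insert e' (addT_E E 1 u v))"
    using sat1 unfolding berge_K4_saturated_def by blast
  have "swap_copy i ` g \<in> insert e (addT_E E k u v)" if "g \<in> insert e' (addT_E E 1 u v)" for g
    using that by (elim insertE) (simp_all add: e'_swap swap_copy_addT_E[OF i])
  from has_berge_K4_image[OF inj_swap_copy this K4] show ?thesis .
qed

lemma berge_K4_saturated_addT:
  fixes E :: "'a set set"
  assumes sat: "berge_K4_saturated V E" and uv: "u \<in> V" "v \<in> V" "u \<noteq> v"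
    and sat1: "berge_K4_saturated (addT_V V 1) (addT_E E 1 u v)"
  shows "berge_K4_saturated (addT_V V k) (addT_E E k u v)"
proof -
  have tg: "three_graph V E" and nE: "\<not> has_berge_K4 E"
    using sat unfolding berge_K4_saturated_def by auto
  obtain g where g: "g \<in> E" "u \<in> g" "v \<in> g"
    using common_edge_if_saturated_addT[OF tg nE uv sat1] by blast
  have "has_berge_K4 (insert e (addT_E E k u v))"
    if e: "e \<subseteq> addT_V V k" "card e = 3" "e \<notin> addT_E E k u v" for e
  proof (cases "e \<subseteq> range Inl")
    case True
    then show ?thesis using has_berge_K4_insert_addT_old[OF sat e] by blast
  next
    case False
    then obtain z where "z \<in> e" "z \<notin> range Inl" by blast
    then obtain i s where i: "Inr (i, s) \<in> e" by (cases z) auto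
    then have "i < k" "s < 2" using e(1) unfolding addT_V_def by auto
    show ?thesis
    proof (cases "\<exists>j t. Inr (j, t) \<in> e \<and> j \<noteq> i")
      case True
      then obtain j t where jt: "Inr (j, t) \<in> e" "j \<noteq> i" by blast
      then have "j < k" "t < 2" using e(1) unfolding addT_V_def by auto
      with g uv(3) \<open>i < k\<close> \<open>s < 2\<close> jt i show ?thesis
        by (intro has_berge_K4_insert_addT_two_copies[of g E u v i k j s t]) auto
    next
      case False
      then show ?thesis using has_berge_K4_insert_addT_one_copy[OF sat1 e \<open>i < k\<close>] by blast
    qed
  qed
  then show ?thesis
    using three_graph_addT[OF tg uv(1,2)] not_has_berge_K4_addT[OF nE]
    unfolding berge_K4_saturated_def by blast
qed

lemma no_berge_K4_insert_addT2:
  fixes E :: "'a set set"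
  assumes nE: "\<not> has_berge_K4 E" and uv: "u \<noteq> v" "u' \<noteq> v'" "{u, v} \<noteq> {u', v'}"
  shows "\<not> has_berge_K4 (insert {Inr (0, 0), Inr (0, 1), Inr (1, 0)} (addT2_E E u v u' v'))"
proof
  define A1 A2 A3 A4 :: "'a + nat \<times> nat"
    where "A1 = Inr (0, 0)" and "A2 = Inr (0, 1)" and "A3 = Inr (1, 0)" and "A4 = Inr (1, 1)"
  note A_defs = A1_def A2_def A3_def A4_def
  define e where "e = {A1, A2, A3}"
  let ?F = "insert e (addT2_E E u v u' v')"
  assume "has_berge_K4 (insert {Inr (0, 0), Inr (0, 1), Inr (1, 0)} (addT2_E E u v u' v'))"
  then obtain Q f where K: "berge_K4_core ?F Q f"
    unfolding has_berge_K4_iff_core e_def A_defs by blast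
  have "{g \<in> ?F. A4 \<in> g} \<subseteq> {{A3, A4, Inl u'}, {A3, A4, Inl v'}}"
    unfolding e_def A_defs addT2_E_def by auto
  then have A4: "A4 \<notin> Q" by (rule berge_K4_core_degree_two[OF K])
  have A3_edges: "{g \<in> ?F. A3 \<in> g} \<subseteq> {{A3, A4, Inl u'}, {A3, A4, Inl v'}, e}"
    unfolding e_def A_defs addT2_E_def by auto
  have "{g \<in> ?F. A1 \<in> g \<or> A2 \<in> g} \<subseteq> {{A1, A2, Inl u}, {A1, A2, Inl v}, {A1, A2, A3}}"
    unfolding e_def A_defs addT2_E_def by auto
  from berge_K4_core_twins[OF K _ this]
  consider "A1 \<notin> Q" "A2 \<notin> Q" | "Inl u \<in> Q" "Inl v \<in> Q" "A3 \<in> Q" unfolding A_defs by auto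
  then show False
  proof cases
    case 1
    show False
    proof (cases "A3 \<in> Q")
      case True
      have "\<exists>x \<in> Q. x \<noteq> A3 \<and> x \<in> e"
        using berge_K4_core_low_degree[OF K True A3_edges _ card_three_le] by blast
      then show False using 1 unfolding e_def by blast
    next
      case False
      have "Q \<subseteq> range Inl"
        using berge_K4_core_subset_Union[OF K] 1 False A4 unfolding e_def A_defs addT2_E_def by auto
      moreover have "g \<in> (`) Inl ` E" if "g \<in> ?F" "x \<noteq> y" "Inl x \<in> g" "Inl y \<in> g" for g x y
        using that unfolding e_def A_defs addT2_E_def by auto
      ultimately have "has_berge_K4 E" by (rule has_berge_K4_preimage[OF inj_Inl K])
      with nE show False ..
    qed
  next
    case 2
    have "w = u' \<or> w = v'" if "Inl w \<in> Q" for w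
    proof -
      have "A3 \<noteq> Inl w" unfolding A3_def by simp
      note pair = berge_K4_core_pair[OF K \<open>A3 \<in> Q\<close> that this]
      then have "f {A3, Inl w} \<in> {{A3, A4, Inl u'}, {A3, A4, Inl v'}, e}" using A3_edges by blast
      then show ?thesis using pair(3) unfolding e_def A_defs by auto
    qed
    then show False using 2 uv by auto
  qed
qed

lemma not_berge_K4_saturated_addT2:
  fixes E :: "'a set set"
  assumes "\<not> has_berge_K4 E" "u \<noteq> v" "u' \<noteq> v'" "{u, v} \<noteq> {u', v'}"
  shows "\<not> berge_K4_saturated (addT2_V V) (addT2_E E u v u' v')"
proof
  let ?e = "{Inr (0, 0), Inr (0, 1), Inr (1, 0)} :: ('a + nat \<times> nat) set"
  assume sat: "berge_K4_saturated (addT2_V V) (addT2_E E u v u' v')"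
  have "?e \<subseteq> addT2_V V" "card ?e = 3" unfolding addT2_V_def by auto
  moreover have "?e \<notin> addT2_E E u v u' v'" unfolding addT2_E_def by auto
  ultimately have "has_berge_K4 (insert ?e (addT2_E E u v u' v'))"
    using sat unfolding berge_K4_saturated_def by blast
  with no_berge_K4_insert_addT2[OF assms] show False by blast
qed

theorem lemma2p1:
  fixes V :: "'a set" and E :: "'a set set" and u v :: 'a
  assumes "finite V"
    and "berge_K4_saturated V E"
    and "u \<in> V" and "v \<in> V" and "u \<noteq> v"
  shows "(berge_K4_saturated (addT_V V 1) (addT_E E 1 u v) \<longrightarrow>
            (\<forall>k::nat. k \<ge> 1 \<longrightarrow> berge_K4_saturated (addT_V V k) (addT_E E k u v)))
       \<and> (\<forall>u' v'. u' \<in> V \<longrightarrow> v' \<in> V \<longrightarrow> u' \<noteq> v' \<longrightarrow> {u, v} \<noteq> {u', v'} \<longrightarrow>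
            \<not> berge_K4_saturated (addT2_V V) (addT2_E E u v u' v'))"
proof -
  have "\<not> has_berge_K4 E" using assms(2) unfolding berge_K4_saturated_def by blast
  then show ?thesis
    using berge_K4_saturated_addT[OF assms(2-5)] not_berge_K4_saturated_addT2[OF _ assms(5)] by blast
qed

end
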